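(* Let $X$ be a compact metric space and $f:X\to X$ a continuous minimal map. Let $D=\{\dots,x_{-2},x_{-1},x_0,x_1,x_2,\dots\}\subseteq X$ be such that $f(x_n)=x_{n+1}$ for every integer $n$. Suppose that some point of $D$ has more than one $f$-preimage in $X$ (equivalently, an $f$-preimage in $X\setminus D$). Then $(f|_D)^{-1}$ is not continuous, i.e., there is no continuous map $g:D\to D$ with $g(f(x))=x$ and $f(g(x))=x$ for all $x\in D$.
   Context: A continuous selfmap of a compact metric space is minimal if every forward orbit is dense (equivalently, there is no proper nonempty closed invariant subset). *)

theory Defs
  imports "HOL-Analysis.Analysis"
begin

definition minimal_map :: "'a::metric_space set \<Rightarrow> ('a \<Rightarrow> 'a) \<Rightarrow> bool" where
  "minimal_map X f \<longleftrightarrow>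
     f ` X \<subseteq> X \<and> continuous_on X f \<and>
     (\<forall>x\<in>X. X \<subseteq> closure {(f ^^ n) x | n. True})"

end

theory Submission
  imports Defs
begin

text \<open>Minimality makes D = range x dense in X. Passing to the limit along D in g (f p) = p,
  a continuous inverse g of f on D would give g (f w) = w for every w \<in> X with f w \<in> D, so every
  point of D would have exactly one preimage in X.\<close>

lemma continuous_left_inverse_on_closure:
  fixes f :: "'a::metric_space \<Rightarrow> 'a" and g :: "'a \<Rightarrow> 'a"
  assumes "continuous_on S f" "D \<subseteq> S" "w \<in> S" "w \<in> closure D"
    and "continuous_on D g" "f ` D \<subseteq> D" "f w \<in> D"
    and "\<And>p. p \<in> D \<Longrightarrow> g (f p) = p"
  shows "g (f w) = w"
proof -
  obtain s where s_in: "\<And>n. s n \<in> D" and s_lim: "s \<longlonglongrightarrow> w"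
    using assms(4) closure_sequential by blast
  have "(\<lambda>n. f (s n)) \<longlonglongrightarrow> f w"
    using s_in assms(2)
    by (intro continuous_on_tendsto_compose[OF assms(1) s_lim assms(3)])
      (auto intro: always_eventually)
  then have "(\<lambda>n. g (f (s n))) \<longlonglongrightarrow> g (f w)"
    using s_in assms(6)
    by (intro continuous_on_tendsto_compose[OF assms(5) _ assms(7)])
      (auto intro: always_eventually)
  moreover have "(\<lambda>n. g (f (s n))) = s"
    using s_in assms(8) by auto
  ultimately have "s \<longlonglongrightarrow> g (f w)"
    by simp
  with s_lim show ?thesis
    by (rule LIMSEQ_unique[symmetric])
qed

lemma funpow_orbit_int:
  fixes f :: "'a \<Rightarrow> 'a" and x :: "int \<Rightarrow> 'a"
  assumes "\<And>n. f (x n) = x (n + 1)"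
  shows "(f ^^ n) (x 0) = x (int n)"
  by (induction n) (auto simp: assms add.commute)

lemma minimal_map_dense_orbit:
  assumes "minimal_map X f" "x0 \<in> X" "\<And>n. (f ^^ n) x0 \<in> D"
  shows "X \<subseteq> closure D"
proof -
  have "X \<subseteq> closure {(f ^^ n) x0 | n. True}"
    using assms(1,2) unfolding minimal_map_def by blast
  also have "\<dots> \<subseteq> closure D"
    using assms(3) by (intro closure_mono) blast
  finally show ?thesis .
qed

theorem lemma3:
  fixes X :: "'a::metric_space set" and f :: "'a \<Rightarrow> 'a" and x :: "int \<Rightarrow> 'a"
  assumes "compact X"
    and "continuous_on X f"
    and "f ` X \<subseteq> X"
    and "minimal_map X f"
    and "\<And>n. x n \<in> X"
    and "\<And>n. f (x n) = x (n + 1)"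
    and "\<exists>d\<in>range x. \<exists>y\<in>X. \<exists>z\<in>X. y \<noteq> z \<and> f y = d \<and> f z = d"
  shows "\<not> (\<exists>g. continuous_on (range x) g \<and> g ` range x \<subseteq> range x \<and>
              (\<forall>p\<in>range x. g (f p) = p \<and> f (g p) = p))"
proof
  assume "\<exists>g. continuous_on (range x) g \<and> g ` range x \<subseteq> range x \<and>
              (\<forall>p\<in>range x. g (f p) = p \<and> f (g p) = p)"
  then obtain g where g_cont: "continuous_on (range x) g"
    and g_inv: "\<And>p. p \<in> range x \<Longrightarrow> g (f p) = p" by blast
  obtain d y z where "d \<in> range x" "y \<in> X" "z \<in> X" "y \<noteq> z" "f y = d" "f z = d"
    using assms(7) by blast
  have D_sub: "range x \<subseteq> X" and D_inv: "f ` range x \<subseteq> range x"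
    using assms(5,6) by auto
  have dense: "X \<subseteq> closure (range x)"
    using minimal_map_dense_orbit[OF assms(4) assms(5)[of 0], of "range x"]
      funpow_orbit_int[of f x, OF assms(6)] by simp
  have preimage_unique: "w = g d" if "w \<in> X" "f w = d" for w
  proof -
    have "w \<in> closure (range x)" and "f w \<in> range x"
      using dense that \<open>d \<in> range x\<close> by auto
    then have "g (f w) = w"
      using continuous_left_inverse_on_closure[OF assms(2) D_sub \<open>w \<in> X\<close> _ g_cont D_inv _ g_inv]
      by blast
    with \<open>f w = d\<close> show ?thesis by simp
  qed
  have "y = g d" "z = g d"
    using preimage_unique \<open>y \<in> X\<close> \<open>z \<in> X\<close> \<open>f y = d\<close> \<open>f z = d\<close> by blast+
  with \<open>y \<noteq> z\<close> show False by argo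
qed

end
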